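(* Let a classification model have feature space $\Phi=[-a,a]^n$ ($a>0$) and $n$ classes, with logits $z=Wx+b$ for $x\in\Phi$, $W\in\mathbb{R}^{n\times n}$, $b\in\mathbb{R}^n$, and $\rho(W)=\min_{i\ne j}\|W[j]-W[i]\|_2>0$. Let $\tau\in(0,1)$ and $\delta=\frac{1}{\rho(W)}\log\big(\frac{\tau(1-n)}{\tau-1}\big)$. For $i\ne j$ let $$\Delta^{(i,j)\pm\delta}_\phi=\Big\{x\in\Phi:\ \frac{|(W[i]-W[j])x+b[i]-b[j]|}{\|W[i]-W[j]\|_2}\le\delta\Big\},\qquad \Gamma\Delta=\bigcup_{i=1}^{n-1}\bigcup_{j=i+1}^n\Delta^{(i,j)\pm\delta}_\phi.$$ Then the fraction of $\Phi$ classified with softmax score at least $\tau$ satisfies $$\mathcal{R}(\Phi(\ge\tau))\ \ge\ 1-\frac{1}{(2a)^n}\mathrm{vol}(\Gamma\Delta),$$ where $\Phi(\ge\tau)=\{x\in\Phi:\max\mathrm{softmax}(Wx+b)\ge\tau\}$, $\mathcal{R}(\Phi(\ge\tau))=\mathrm{vol}(\Phi(\ge\tau))/(2a)^n$, and $\mathrm{vol}$ is $n$-dimensional Lebesgue measure.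
   Context: $W[k]$ denotes the $k$-th row of $W$; $\mathrm{softmax}(z)[k]=e^{z[k]}/\sum_l e^{z[l]}$. *)

theory Defs
  imports "HOL-Analysis.Analysis"
begin

definition softmax :: "real ^ 'n \<Rightarrow> real ^ 'n" where
  "softmax z = (\<chi> k. exp (z $ k) / (\<Sum>l\<in>UNIV. exp (z $ l)))"

definition max_softmax :: "real ^ 'n \<Rightarrow> real" where
  "max_softmax z = Max (range (\<lambda>k. softmax z $ k))"

definition rho :: "real ^ 'n ^ 'n \<Rightarrow> real" where
  "rho W = Min {norm (W $ j - W $ i) | i j. i \<noteq> j}"

definition feature_cube :: "real \<Rightarrow> (real ^ 'n) set" where
  "feature_cube a = {x. \<forall>i. \<bar>x $ i\<bar> \<le> a}"

definition band :: "real \<Rightarrow> real ^ 'n ^ 'n \<Rightarrow> real ^ 'n \<Rightarrow> real \<Rightarrow> 'n \<Rightarrow> 'n \<Rightarrow> (real ^ 'n) set" where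
  "band a W b \<delta> i j = {x \<in> feature_cube a.
     \<bar>(W $ i - W $ j) \<bullet> x + b $ i - b $ j\<bar> / norm (W $ i - W $ j) \<le> \<delta>}"

text \<open>Gamma Delta: union of bands over all pairs i < j (equivalently i /= j, bands are symmetric).\<close>
definition Gamma_Delta :: "real \<Rightarrow> real ^ 'n ^ 'n \<Rightarrow> real ^ 'n \<Rightarrow> real \<Rightarrow> (real ^ 'n) set" where
  "Gamma_Delta a W b \<delta> = (\<Union>i. \<Union>j\<in>{j. j \<noteq> i}. band a W b \<delta> i j)"

definition confident_region :: "real \<Rightarrow> real ^ 'n ^ 'n \<Rightarrow> real ^ 'n \<Rightarrow> real \<Rightarrow> (real ^ 'n) set" where
  "confident_region a W b \<tau> = {x \<in> feature_cube a. max_softmax (W *v x + b) \<ge> \<tau>}"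

end

theory Submission
  imports Defs
begin

text \<open>Let \<open>k\<close> be the largest logit at \<open>x\<close>. Outside \<open>\<Gamma>\<Delta>\<close> every other logit \<open>j\<close> is smaller by more
  than \<open>\<delta> \<parallel>W[k] - W[j]\<parallel>\<close>, hence by at least \<open>\<delta> \<rho>(W) = ln (\<tau> (n - 1) / (1 - \<tau>))\<close> (trivially so
  when \<open>\<delta> < 0\<close>), and such a gap forces \<open>softmax k \<ge> 1 / (1 + (n - 1) exp (- \<delta> \<rho>(W))) = \<tau>\<close>.
  So the cube is covered by \<open>\<Phi>(\<ge>\<tau>) \<union> \<Gamma>\<Delta>\<close>, and subadditivity of Lebesgue measure gives the
  bound.\<close>

lemma feature_cube_eq_cbox: "feature_cube a = cbox (- (\<chi> i. a)) ((\<chi> i. a) :: real ^ 'n)"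
  by (auto simp: feature_cube_def mem_box_cart abs_le_iff) (metis minus_le_iff)+

lemma measure_feature_cube:
  assumes "a > 0"
  shows "measure lebesgue (feature_cube a :: (real ^ 'n) set) = (2 * a) ^ CARD('n)"
proof -
  have "0 \<in> cbox (- (\<chi> i. a)) ((\<chi> i. a) :: real ^ 'n)"
    using assms by (auto simp: mem_box_cart)
  then have nonempty: "cbox (- (\<chi> i. a)) ((\<chi> i. a) :: real ^ 'n) \<noteq> {}"
    by auto
  show ?thesis
    using content_cbox_cart[OF nonempty] unfolding feature_cube_eq_cbox by simp
qed

lemma closed_feature_cube: "closed (feature_cube a :: (real ^ 'n) set)"
  unfolding feature_cube_eq_cbox by (rule closed_cbox)

lemma closed_band: "closed (band a W b \<delta> i j)"
proof -
  have "band a W b \<delta> i j = feature_cube a \<inter>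
      {x. \<bar>(W $ i - W $ j) \<bullet> x + b $ i - b $ j\<bar> * inverse (norm (W $ i - W $ j)) \<le> \<delta>}"
    by (auto simp: band_def divide_inverse)
  then show ?thesis
    by (simp add: closed_feature_cube closed_Int closed_Collect_le continuous_intros)
qed

lemma closed_Gamma_Delta: "closed (Gamma_Delta a W b \<delta>)"
  unfolding Gamma_Delta_def by (intro closed_UN ballI closed_band) auto

lemma continuous_on_logit:
  fixes W :: "real ^ 'm ^ 'n"
  shows "continuous_on UNIV (\<lambda>x. (W *v x + b) $ k)"
  by (simp add: matrix_vector_mul_component) (intro continuous_intros)

lemma sum_exp_pos: "(\<Sum>l\<in>UNIV. exp (z $ l :: real)) > 0"
  by (rule sum_pos) auto

lemma closed_confident_region: "closed (confident_region a W b \<tau>)"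
proof -
  have "confident_region a W b \<tau> = feature_cube a \<inter>
     (\<Union>k. {x. \<tau> \<le> exp ((W *v x + b) $ k) / (\<Sum>l\<in>UNIV. exp ((W *v x + b) $ l))})"
    by (auto simp: confident_region_def max_softmax_def softmax_def Max_ge_iff)
  moreover have "closed {x. \<tau> \<le> exp ((W *v x + b) $ k) / (\<Sum>l\<in>UNIV. exp ((W *v x + b) $ l))}"
    for k
    by (intro closed_Collect_le continuous_intros continuous_on_logit
        continuous_on_compose2[OF continuous_on_exp continuous_on_logit])
       (intro ballI sum_exp_pos[THEN less_imp_neq, THEN not_sym])
  ultimately show ?thesis
    by (simp add: closed_Int closed_UN closed_feature_cube)
qed

lemma closed_imp_sets_lebesgue: "closed S \<Longrightarrow> S \<in> sets lebesgue"
  by (simp add: borel_closed sets_completionI_sets)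

lemma rho_le_norm_diff:
  assumes "i \<noteq> j"
  shows "rho W \<le> norm (W $ j - W $ i)"
proof -
  have "finite {norm (W $ j - W $ i) | i j. i \<noteq> j}"
    by (rule finite_subset[of _ "(\<lambda>(i, j). norm (W $ j - W $ i)) ` UNIV"]) auto
  then show ?thesis
    unfolding rho_def by (rule Min_le) (use assms in auto)
qed

lemma softmax_ge_of_logit_gap:
  fixes z :: "real ^ 'n"
  assumes gap: "\<And>j. j \<noteq> k \<Longrightarrow> z $ k - z $ j \<ge> L"
  shows "softmax z $ k \<ge> 1 / (1 + (real CARD('n) - 1) * exp (- L))"
proof -
  define S where "S = (\<Sum>l\<in>UNIV. exp (z $ l))"
  have other: "exp (z $ j) \<le> exp (z $ k) * exp (- L)" if "j \<noteq> k" for j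
    using gap[OF that] by (simp flip: exp_add)
  have "S = exp (z $ k) + (\<Sum>l\<in>UNIV - {k}. exp (z $ l))"
    unfolding S_def by (rule sum.remove) auto
  also have "(\<Sum>l\<in>UNIV - {k}. exp (z $ l)) \<le> real (card (UNIV - {k})) * (exp (z $ k) * exp (- L))"
    by (rule sum_bounded_above) (use other in auto)
  also have "real (card (UNIV - {k} :: 'n set)) = real CARD('n) - 1"
    by (simp add: card_Diff_singleton of_nat_diff)
  finally have "S \<le> exp (z $ k) * (1 + (real CARD('n) - 1) * exp (- L))"
    by (simp add: algebra_simps)
  moreover have "S > 0"
    unfolding S_def by (rule sum_exp_pos)
  ultimately have "exp (z $ k) / (exp (z $ k) * (1 + (real CARD('n) - 1) * exp (- L)))
      \<le> exp (z $ k) / S"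
    by (intro divide_left_mono) auto
  then show ?thesis
    by (simp add: softmax_def S_def)
qed

lemma logit_gap_outside_band:
  assumes "x \<in> feature_cube a" "x \<notin> band a W b \<delta> k j"
    and "rho W > 0" "j \<noteq> k"
    and max: "(W *v x + b) $ j \<le> (W *v x + b) $ k"
  shows "(W *v x + b) $ k - (W *v x + b) $ j \<ge> \<delta> * rho W"
proof -
  have diff: "(W *v x + b) $ k - (W *v x + b) $ j = (W $ k - W $ j) \<bullet> x + b $ k - b $ j"
    by (simp add: matrix_vector_mul_component inner_diff_left)
  have norm_ge: "norm (W $ k - W $ j) \<ge> rho W"
    using rho_le_norm_diff[OF \<open>j \<noteq> k\<close>] .
  with \<open>rho W > 0\<close> have "norm (W $ k - W $ j) > 0"
    by linarith
  moreover have "\<delta> < \<bar>(W *v x + b) $ k - (W *v x + b) $ j\<bar> / norm (W $ k - W $ j)"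
    using assms(1,2) unfolding diff by (simp add: band_def)
  ultimately have "(W *v x + b) $ k - (W *v x + b) $ j > \<delta> * norm (W $ k - W $ j)"
    using max by (simp add: pos_less_divide_eq)
  moreover have "\<delta> * norm (W $ k - W $ j) \<ge> \<delta> * rho W \<or> \<delta> * rho W < 0"
    using norm_ge \<open>rho W > 0\<close> by (cases "\<delta> \<ge> 0") (auto intro: mult_left_mono mult_neg_pos)
  ultimately show ?thesis
    using max by linarith
qed

lemma softmax_threshold_eq:
  assumes "n \<ge> 2" "0 < \<tau>" "\<tau> < 1"
  shows "1 / (1 + (real n - 1) * exp (- ln (\<tau> * (1 - real n) / (\<tau> - 1)))) = \<tau>"
proof -
  have "\<tau> * (1 - real n) / (\<tau> - 1) > 0"
    using assms by (intro divide_neg_neg mult_pos_neg) auto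
  with assms show ?thesis
    by (simp add: exp_minus field_simps)
qed

lemma confident_outside_Gamma_Delta:
  fixes W :: "real ^ 'n ^ 'n"
  assumes "CARD('n) \<ge> 2" "rho W > 0" "0 < \<tau>" "\<tau> < 1"
    and "x \<in> feature_cube a"
    and "x \<notin> Gamma_Delta a W b ((1 / rho W) * ln (\<tau> * (1 - real CARD('n)) / (\<tau> - 1)))"
  shows "x \<in> confident_region a W b \<tau>"
proof -
  define z where "z = W *v x + b"
  have "finite (range (($) z))"
    by simp
  then obtain k where k: "\<And>j. z $ j \<le> z $ k"
    using Max_in[of "range (($) z)"] Max_ge[of "range (($) z)"] by fastforce
  have "z $ k - z $ j \<ge> ln (\<tau> * (1 - real CARD('n)) / (\<tau> - 1))" if "j \<noteq> k" for j
  proof -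
    have "x \<notin> band a W b ((1 / rho W) * ln (\<tau> * (1 - real CARD('n)) / (\<tau> - 1))) k j"
      using assms(6) that by (auto simp: Gamma_Delta_def)
    then have "z $ k - z $ j \<ge> (1 / rho W) * ln (\<tau> * (1 - real CARD('n)) / (\<tau> - 1)) * rho W"
      using logit_gap_outside_band[OF assms(5) _ assms(2) that] k unfolding z_def by blast
    then show ?thesis
      using assms(2) by simp
  qed
  then have "softmax z $ k \<ge> \<tau>"
    using softmax_ge_of_logit_gap softmax_threshold_eq[OF assms(1,3,4)] by metis
  also have "softmax z $ k \<le> max_softmax z"
    unfolding max_softmax_def by (rule Max_ge) auto
  finally show ?thesis
    using assms(5) by (simp add: confident_region_def z_def)
qed

theorem theorem5:
  fixes a \<tau> :: real and W :: "real ^ 'n ^ 'n" and b :: "real ^ 'n"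
  assumes "CARD('n) \<ge> 2"
    and "a > 0"
    and "rho W > 0"
    and "0 < \<tau>" and "\<tau> < 1"
  shows "measure lebesgue (confident_region a W b \<tau>) / (2 * a) ^ CARD('n)
    \<ge> 1 - measure lebesgue (Gamma_Delta a W b
          ((1 / rho W) * ln (\<tau> * (1 - real CARD('n)) / (\<tau> - 1)))) / (2 * a) ^ CARD('n)"
proof -
  define C where "C = confident_region a W b \<tau>"
  define G where "G = Gamma_Delta a W b ((1 / rho W) * ln (\<tau> * (1 - real CARD('n)) / (\<tau> - 1)))"
  define P where "P = (2 * a) ^ CARD('n)"
  have "feature_cube a \<subseteq> C \<union> G"
    using confident_outside_Gamma_Delta[OF assms(1,3-5)] unfolding C_def G_def by blast
  moreover have "C \<union> G \<subseteq> feature_cube a"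
    by (auto simp: C_def G_def confident_region_def Gamma_Delta_def band_def)
  ultimately have cover: "feature_cube a = C \<union> G"
    by (rule subset_antisym)
  have "P = measure lebesgue (feature_cube a :: (real ^ 'n) set)"
    unfolding P_def by (rule measure_feature_cube[OF assms(2), symmetric])
  also have "\<dots> = measure lebesgue (C \<union> G)"
    by (simp add: cover)
  also have "\<dots> \<le> measure lebesgue C + measure lebesgue G"
    unfolding C_def G_def
    by (intro measure_Un_le closed_imp_sets_lebesgue closed_confident_region closed_Gamma_Delta)
  finally have "P \<le> measure lebesgue C + measure lebesgue G" .
  moreover have "P > 0"
    using assms(2) by (simp add: P_def)
  ultimately show ?thesis
    unfolding C_def[symmetric] G_def[symmetric] P_def[symmetric]
    by (simp add: le_divide_eq left_diff_distrib)
qed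

end
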